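(* Let $G$ be a finite group with $K(G)>1$ and $Z_2>Z(G)$, and write $K=K(G)$. Then the following are equivalent: (1) $Z_K>Z(G)$; (2) there exists $g\in G$ with $[g,G]=K$; (3) $K=[Z_K,G]$.
   Context: For $\chi\in\mathrm{Irr}(G)$, the center of $\chi$ is $Z(\chi)=\{g\in G : |\chi(g)|=\chi(1)\}$. For a nonabelian group $G$, let $\mathcal{X}=\{\chi\in\mathrm{Irr}(G) : Z(\chi)>Z(G)\}$ (strict containment) and define $K(G)=\bigcap_{\chi\in\mathcal{X}}\ker(\chi)$; if $G$ is abelian, set $K(G)=G$. $Z_2$ is defined by $Z_2/Z(G)=Z(G/Z(G))$; for a normal subgroup $N$, $Z_N$ is defined by $Z_N/N=Z(G/N)$. For $g\in G$, $[g,G]$ is the subgroup generated by $\{[g,x]:x\in G\}$. *)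

theory Defs
  imports "HOL-Algebra.Algebra" "Jordan_Normal_Form.Matrix"
begin

definition grp_center :: "('g, 'b) monoid_scheme \<Rightarrow> 'g set" where
  "grp_center G = {z \<in> carrier G. \<forall>x \<in> carrier G. z \<otimes>\<^bsub>G\<^esub> x = x \<otimes>\<^bsub>G\<^esub> z}"

definition upper_Z :: "('g, 'b) monoid_scheme \<Rightarrow> 'g set \<Rightarrow> 'g set" where
  "upper_Z G N = {g \<in> carrier G. N #>\<^bsub>G\<^esub> g \<in> grp_center (G Mod N)}"

definition gcomm :: "('g, 'b) monoid_scheme \<Rightarrow> 'g \<Rightarrow> 'g \<Rightarrow> 'g" where
  "gcomm G g x = inv\<^bsub>G\<^esub> g \<otimes>\<^bsub>G\<^esub> inv\<^bsub>G\<^esub> x \<otimes>\<^bsub>G\<^esub> g \<otimes>\<^bsub>G\<^esub> x"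

definition elem_comm :: "('g, 'b) monoid_scheme \<Rightarrow> 'g \<Rightarrow> 'g set" where
  "elem_comm G g = generate G {gcomm G g x | x. x \<in> carrier G}"

definition set_comm :: "('g, 'b) monoid_scheme \<Rightarrow> 'g set \<Rightarrow> 'g set" where
  "set_comm G H = generate G {gcomm G h x | h x. h \<in> H \<and> x \<in> carrier G}"

definition is_rep :: "('g, 'b) monoid_scheme \<Rightarrow> nat \<Rightarrow> ('g \<Rightarrow> complex mat) \<Rightarrow> bool" where
  "is_rep G n \<rho> \<longleftrightarrow>
     (\<forall>g \<in> carrier G. \<rho> g \<in> carrier_mat n n) \<and>
     \<rho> \<one>\<^bsub>G\<^esub> = 1\<^sub>m n \<and>
     (\<forall>x \<in> carrier G. \<forall>y \<in> carrier G. \<rho> (x \<otimes>\<^bsub>G\<^esub> y) = \<rho> x * \<rho> y)"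

definition invariant_subspace :: "('g, 'b) monoid_scheme \<Rightarrow> nat \<Rightarrow> ('g \<Rightarrow> complex mat) \<Rightarrow> complex vec set \<Rightarrow> bool" where
  "invariant_subspace G n \<rho> W \<longleftrightarrow>
     W \<subseteq> carrier_vec n \<and> 0\<^sub>v n \<in> W \<and>
     (\<forall>v \<in> W. \<forall>w \<in> W. v + w \<in> W) \<and>
     (\<forall>c. \<forall>v \<in> W. c \<cdot>\<^sub>v v \<in> W) \<and>
     (\<forall>g \<in> carrier G. \<forall>v \<in> W. \<rho> g *\<^sub>v v \<in> W)"

definition irr_rep :: "('g, 'b) monoid_scheme \<Rightarrow> nat \<Rightarrow> ('g \<Rightarrow> complex mat) \<Rightarrow> bool" where
  "irr_rep G n \<rho> \<longleftrightarrow> is_rep G n \<rho> \<and> n > 0 \<and>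
     \<not> (\<exists>W. invariant_subspace G n \<rho> W \<and> W \<noteq> {0\<^sub>v n} \<and> W \<noteq> carrier_vec n)"

definition rep_char :: "('g, 'b) monoid_scheme \<Rightarrow> nat \<Rightarrow> ('g \<Rightarrow> complex mat) \<Rightarrow> 'g \<Rightarrow> complex" where
  "rep_char G n \<rho> g = (if g \<in> carrier G then (\<Sum>i<n. \<rho> g $$ (i, i)) else 0)"

definition Irr :: "('g, 'b) monoid_scheme \<Rightarrow> ('g \<Rightarrow> complex) set" where
  "Irr G = {rep_char G n \<rho> | n \<rho>. irr_rep G n \<rho>}"

definition char_ker :: "('g, 'b) monoid_scheme \<Rightarrow> ('g \<Rightarrow> complex) \<Rightarrow> 'g set" where
  "char_ker G \<chi> = {g \<in> carrier G. \<chi> g = \<chi> \<one>\<^bsub>G\<^esub>}"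

definition char_center :: "('g, 'b) monoid_scheme \<Rightarrow> ('g \<Rightarrow> complex) \<Rightarrow> 'g set" where
  "char_center G \<chi> = {g \<in> carrier G. cmod (\<chi> g) = cmod (\<chi> \<one>\<^bsub>G\<^esub>)}"

definition K_grp :: "('g, 'b) monoid_scheme \<Rightarrow> 'g set" where
  "K_grp G = (if grp_center G = carrier G then carrier G
     else carrier G \<inter> \<Inter> {char_ker G \<chi> | \<chi>. \<chi> \<in> Irr G \<and> grp_center G \<subset> char_center G \<chi>})"

end

theory Submission
  imports Defs "Jordan_Normal_Form.Jordan_Normal_Form_Existence" "Jordan_Normal_Form.Spectral_Radius"
begin

(* Write K = K(G) and call g a witness if g \<in> Z_K but g \<notin> Z(G); Z_K consists of the g with
   [g,G] \<subseteq> K. The key fact is that K \<subseteq> [g,G] for every g \<notin> Z(G). Indeed [g,G] is normal, and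
   every h \<notin> [g,G] is detected by an irreducible character \<chi> whose kernel contains [g,G] (a
   constituent of the permutation character of G/[g,G] that differs from its degree at h). For such
   \<chi> the matrix \<rho>(g) commutes with \<rho>(G), so g \<in> Z(\<chi>) by Schur's lemma, while Z(G) \<subseteq> Z(\<chi>)
   always; hence Z(\<chi>) > Z(G), so K \<subseteq> ker \<chi>, and h \<notin> K. Condition (1) says that a witness
   exists; [g,G] = K holds exactly for the witnesses g, and [Z_K,G] = K holds exactly when a
   witness exists, since otherwise [Z_K,G] = 1 < K. *)

section \<open>Matrices of finite order\<close>

definition mat_trace :: "'a::comm_ring_1 mat \<Rightarrow> 'a" where
  "mat_trace A = (\<Sum>i<dim_row A. A $$ (i, i))"

lemma mat_trace_one_mat [simp]: "mat_trace (1\<^sub>m n :: 'a::comm_ring_1 mat) = of_nat n"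
proof -
  have "mat_trace (1\<^sub>m n :: 'a mat) = (\<Sum>i<n. 1)" unfolding mat_trace_def by (rule sum.cong) auto
  then show ?thesis by simp
qed

lemma mat_trace_mult_comm:
  fixes A B :: "'a::comm_ring_1 mat"
  assumes "A \<in> carrier_mat n m" and "B \<in> carrier_mat m n"
  shows "mat_trace (A * B) = mat_trace (B * A)"
proof -
  have "mat_trace (A * B) = (\<Sum>i<n. \<Sum>j<m. A $$ (i, j) * B $$ (j, i))"
    using assms by (simp add: mat_trace_def scalar_prod_def lessThan_atLeast0)
  also have "\<dots> = (\<Sum>j<m. \<Sum>i<n. B $$ (j, i) * A $$ (i, j))"
    by (subst sum.swap) (simp add: mult.commute)
  also have "\<dots> = mat_trace (B * A)"
    using assms by (simp add: mat_trace_def scalar_prod_def lessThan_atLeast0)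
  finally show ?thesis .
qed

lemma similar_mat_wit_mat_trace:
  fixes A B :: "'a::comm_ring_1 mat"
  assumes "similar_mat_wit A B P Q"
  shows "mat_trace A = mat_trace B"
proof -
  obtain n where car: "{A, B, P, Q} \<subseteq> carrier_mat n n" and QP: "Q * P = 1\<^sub>m n"
    and A: "A = P * B * Q"
    using similar_mat_witD[OF refl assms] by blast
  have "mat_trace A = mat_trace (P * (B * Q))"
    using car by (simp add: A assoc_mult_mat[of _ n n _ n _ n])
  also have "\<dots> = mat_trace ((B * Q) * P)"
    using car by (intro mat_trace_mult_comm) auto
  also have "\<dots> = mat_trace B"
    using car by (simp add: QP assoc_mult_mat[of _ n n _ n _ n] right_mult_one_mat[of B n n])
  finally show ?thesis .
qed

lemma similar_mat_wit_one:
  assumes "similar_mat_wit A B P Q" and "B = 1\<^sub>m n"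
  shows "A = 1\<^sub>m n"
proof -
  obtain n' where car: "{A, B, P, Q} \<subseteq> carrier_mat n' n'" and PQ: "P * Q = 1\<^sub>m n'"
    and A: "A = P * B * Q"
    using similar_mat_witD[OF refl assms(1)] by blast
  have "n' = n" using car assms(2) by auto
  then have "P \<in> carrier_mat n n" using car by simp
  then show ?thesis using A PQ assms(2) \<open>n' = n\<close> by simp
qed

lemma similar_mat_wit_conj:
  assumes A: "A \<in> carrier_mat n n" and P: "P \<in> carrier_mat n n" and Q: "Q \<in> carrier_mat n n"
    and PQ: "P * Q = 1\<^sub>m n" and QP: "Q * P = 1\<^sub>m n"
  shows "similar_mat_wit A (Q * A * P) P Q"
proof -
  have "P * (Q * A * P) * Q = (P * Q) * A * (P * Q)"
    using A P Q by (simp add: assoc_mult_mat[of _ n n _ n _ n])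
  then show ?thesis using A P Q PQ QP by (auto simp: similar_mat_wit_def)
qed

lemma sum_lessThan_add:
  fixes a b :: nat
  shows "(\<Sum>i<a + b. f i) = (\<Sum>i<a. f i) + (\<Sum>i<b. f (a + i))"
  by (induct b) (auto simp: add.assoc)

lemma mat_trace_diag_block_mat:
  assumes "\<forall>B \<in> set Bs. square_mat B"
  shows "mat_trace (diag_block_mat Bs) = sum_list (map mat_trace Bs)"
  using assms
proof (induct Bs)
  case Nil
  then show ?case by (simp add: mat_trace_def)
next
  case (Cons A As)
  let ?D = "diag_block_mat As"
  have "square_mat ?D" and "dim_col A = dim_row A" using Cons diag_block_mat_square by auto
  then have "mat_trace (diag_block_mat (A # As)) = mat_trace A + mat_trace ?D"
    by (simp add: mat_trace_def Let_def sum_lessThan_add)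
  then show ?case using Cons by simp
qed

lemma diag_block_mat_eq_one_imp_blocks_one:
  assumes "\<forall>B \<in> set Bs. square_mat B"
    and "diag_block_mat Bs = 1\<^sub>m (sum_list (map dim_row Bs))"
    and "B \<in> set Bs"
  shows "B = 1\<^sub>m (dim_row B)"
  using assms
proof (induct Bs)
  case Nil
  then show ?case by simp
next
  case (Cons A As)
  let ?D = "diag_block_mat As"
  have sqD: "square_mat ?D" and sqA: "dim_col A = dim_row A"
    using Cons diag_block_mat_square by auto
  have dD: "dim_row ?D = sum_list (map dim_row As)" by (simp add: dim_diag_block_mat)
  let ?F = "four_block_mat A (0\<^sub>m (dim_row A) (dim_col ?D)) (0\<^sub>m (dim_row ?D) (dim_col A)) ?D"
  have F: "?F = 1\<^sub>m (dim_row A + dim_row ?D)" using Cons(3) dD by (simp add: Let_def)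
  have A1: "A = 1\<^sub>m (dim_row A)"
  proof (rule eq_matI)
    fix i j assume "i < dim_row (1\<^sub>m (dim_row A))" "j < dim_col (1\<^sub>m (dim_row A))"
    moreover have "?F $$ (i, j) = 1\<^sub>m (dim_row A + dim_row ?D) $$ (i, j)" using F by simp
    ultimately show "A $$ (i, j) = 1\<^sub>m (dim_row A) $$ (i, j)" using sqA sqD by auto
  qed (use sqA in auto)
  have D1: "?D = 1\<^sub>m (dim_row ?D)"
  proof (rule eq_matI)
    fix i j assume "i < dim_row (1\<^sub>m (dim_row ?D))" "j < dim_col (1\<^sub>m (dim_row ?D))"
    moreover have "?F $$ (dim_row A + i, dim_row A + j)
        = 1\<^sub>m (dim_row A + dim_row ?D) $$ (dim_row A + i, dim_row A + j)"
      using F by simp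
    ultimately show "?D $$ (i, j) = 1\<^sub>m (dim_row ?D) $$ (i, j)" using sqA sqD by auto
  qed (use sqD in auto)
  show ?case
  proof (cases "B = A")
    case True
    then show ?thesis using A1 by simp
  next
    case False
    then have "B \<in> set As" using Cons by auto
    then show ?thesis using Cons(1) Cons(2) D1 dD by auto
  qed
qed

text \<open>The entry (0,1) of the m-th power of a Jordan block of size at least two is m a^(m-1),
  which is nonzero in characteristic zero.\<close>
lemma jordan_block_pow_eq_one_imp:
  fixes a :: complex
  assumes "0 < k" and "0 < m" and pow: "jordan_block k a ^\<^sub>m m = 1\<^sub>m k"
  shows "k = 1 \<and> a ^ m = 1"
proof -
  have entry: "(if i \<le> j then of_nat (m choose (j - i)) * a ^ (m + i - j) else 0)
      = (if i = j then 1 else (0::complex))" if "i < k" "j < k" for i j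
    using arg_cong[OF pow, of "\<lambda>M. M $$ (i, j)"] that by (simp add: jordan_block_pow)
  have am: "a ^ m = 1" using entry[of 0 0] assms(1) by simp
  moreover have "k = 1"
  proof (rule ccontr)
    assume "k \<noteq> 1"
    then have "of_nat m * a ^ (m - 1) = (0::complex)" using entry[of 0 1] assms(1) by simp
    moreover have "a \<noteq> 0" using am assms(2) by (metis power_0_left less_not_refl2 zero_neq_one)
    ultimately show False using assms(2) by simp
  qed
  ultimately show ?thesis by simp
qed

lemma jordan_matrix_pow_eq_one_imp:
  fixes n_as :: "(nat \<times> complex) list"
  assumes "0 \<notin> fst ` set n_as" and "0 < m"
    and "jordan_matrix n_as ^\<^sub>m m = 1\<^sub>m (sum_list (map fst n_as))"
    and "(k, a) \<in> set n_as"
  shows "k = 1 \<and> a ^ m = 1"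
proof -
  let ?Bs = "map (\<lambda>(k, a). jordan_block k a ^\<^sub>m m) n_as"
  have "sum_list (map dim_row ?Bs) = sum_list (map fst n_as)"
    by (simp add: o_def case_prod_beta')
  then have one: "diag_block_mat ?Bs = 1\<^sub>m (sum_list (map dim_row ?Bs))"
    using assms(3) by (simp add: jordan_matrix_pow)
  have "jordan_block k a ^\<^sub>m m \<in> set ?Bs"
    by (subst set_map, rule image_eqI[OF _ assms(4)]) simp
  moreover have "\<forall>B \<in> set ?Bs. square_mat B" by auto
  ultimately have "jordan_block k a ^\<^sub>m m = 1\<^sub>m (dim_row (jordan_block k a ^\<^sub>m m))"
    using diag_block_mat_eq_one_imp_blocks_one[OF _ one] by blast
  then have "jordan_block k a ^\<^sub>m m = 1\<^sub>m k" by simp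
  moreover have "0 < k" using assms(1,4) by (metis fst_conv gr0I image_eqI)
  ultimately show ?thesis using jordan_block_pow_eq_one_imp assms(2) by blast
qed

lemma sum_list_unit_circle_eq_length_imp_one:
  fixes xs :: "complex list"
  assumes "\<forall>a \<in> set xs. cmod a = 1" and "sum_list xs = of_nat (length xs)"
    and "a \<in> set xs"
  shows "a = 1"
proof -
  have re_le: "\<forall>a \<in> set xs. Re a \<le> 1" using assms(1) by (metis abs_Re_le_cmod abs_le_D1)
  have "sum_list (map (\<lambda>a. 1 - Re a) xs) = real (length xs) - Re (sum_list xs)"
    by (induct xs) auto
  then have "sum_list (map (\<lambda>a. 1 - Re a) xs) = 0" using assms(2) by simp
  then have "Re a = 1" using re_le assms(3) by (subst (asm) sum_list_nonneg_eq_0_iff) auto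
  moreover have "(cmod a)\<^sup>2 = (Re a)\<^sup>2 + (Im a)\<^sup>2" by (simp add: cmod_power2)
  ultimately show "a = 1" using assms(1,3) by (simp add: complex_eq_iff)
qed

lemma jordan_matrix_one_by_one:
  fixes n_as :: "(nat \<times> 'a::comm_ring_1) list"
  assumes "\<And>k a. (k, a) \<in> set n_as \<Longrightarrow> k = 1"
  shows "mat_trace (jordan_matrix n_as) = sum_list (map snd n_as)"
    and "sum_list (map fst n_as) = length n_as"
proof -
  have "mat_trace (jordan_matrix n_as) = sum_list (map mat_trace (map (\<lambda>(k, a). jordan_block k a) n_as))"
    unfolding jordan_matrix_def by (rule mat_trace_diag_block_mat) auto
  also have "map mat_trace (map (\<lambda>(k, a). jordan_block k a) n_as) = map snd n_as"
    using assms by (force simp: mat_trace_def)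
  finally show "mat_trace (jordan_matrix n_as) = sum_list (map snd n_as)" .
  have "map fst n_as = map (\<lambda>_. 1) n_as"
    using assms by (auto intro: map_cong)
  then show "sum_list (map fst n_as) = length n_as"
    by (metis sum_list_triv mult_1_right of_nat_id)
qed

lemma jordan_matrix_eq_one_mat:
  fixes n_as :: "(nat \<times> 'a::comm_ring_1) list"
  assumes "\<And>k a. (k, a) \<in> set n_as \<Longrightarrow> k = 1 \<and> a = 1"
  shows "jordan_matrix n_as = 1\<^sub>m (length n_as)"
proof -
  have "jordan_block k a = 1\<^sub>m (dim_row (jordan_block k a))" if "(k, a) \<in> set n_as" for k a
    using assms[OF that] by (intro eq_matI) auto
  then have "jordan_matrix n_as
      = diag_block_mat (map (\<lambda>B. 1\<^sub>m (dim_row B)) (map (\<lambda>(k, a). jordan_block k a) n_as))"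
    unfolding jordan_matrix_def by (intro arg_cong[of _ _ diag_block_mat]) auto
  also have "\<dots> = 1\<^sub>m (sum_list (map fst n_as))"
    unfolding diag_block_one_mat by (simp add: o_def case_prod_beta')
  also have "sum_list (map fst n_as) = length n_as"
    using jordan_matrix_one_by_one(2)[OF conjunct1[OF assms]] .
  finally show ?thesis .
qed

text \<open>A complex matrix of finite order is diagonalisable with roots of unity on the diagonal, and
  these can only sum to the dimension if all of them are 1.\<close>
lemma finite_order_mat_trace_eq_dim_imp_one:
  fixes A :: "complex mat"
  assumes A: "A \<in> carrier_mat n n" and "0 < m" and pow: "A ^\<^sub>m m = 1\<^sub>m n"
    and tr: "mat_trace A = of_nat n"
  shows "A = 1\<^sub>m n"
proof -
  obtain n_as where "jordan_nf A n_as"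
    using char_poly_factorized[OF A] jordan_nf_exists[OF A] by metis
  then obtain P Q where nz: "0 \<notin> fst ` set n_as"
    and sim: "similar_mat_wit A (jordan_matrix n_as) P Q"
    unfolding jordan_nf_def similar_mat_def by blast
  have dim: "sum_list (map fst n_as) = n"
    using similar_mat_witD2[OF A sim] by (metis carrier_matD(1) jordan_matrix_dim(1))
  have "jordan_matrix n_as ^\<^sub>m m = 1\<^sub>m n"
    using similar_mat_wit_one[OF similar_mat_wit_sym[OF similar_mat_wit_pow[OF sim]]] pow by blast
  then have blocks: "k = 1 \<and> a ^ m = 1" if "(k, a) \<in> set n_as" for k a
    using jordan_matrix_pow_eq_one_imp[OF nz \<open>0 < m\<close>] that dim by blast
  note one_by_one = jordan_matrix_one_by_one[of n_as, OF conjunct1[OF blocks]]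
  have len: "length n_as = n" using one_by_one(2) dim by simp
  have sum: "sum_list (map snd n_as) = of_nat (length (map snd n_as))"
    using one_by_one(1) similar_mat_wit_mat_trace[OF sim] tr len by simp
  have unit: "\<forall>a \<in> set (map snd n_as). cmod a = 1"
    using blocks \<open>0 < m\<close> power_eq_1_iff by fastforce
  have ones: "k = 1 \<and> a = 1" if ka: "(k, a) \<in> set n_as" for k a
  proof
    show "k = 1" using blocks[OF ka] by simp
    show "a = 1" using sum_list_unit_circle_eq_length_imp_one[OF unit sum] ka by force
  qed
  have "jordan_matrix n_as = 1\<^sub>m n"
    using jordan_matrix_eq_one_mat[OF ones] len by simp
  then show ?thesis using similar_mat_wit_one[OF sim] by blast
qed

section \<open>Block triangular matrices and adapted bases\<close>

definition block_upper_triangular :: "nat \<Rightarrow> 'a::zero mat \<Rightarrow> bool" where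
  "block_upper_triangular k A \<longleftrightarrow> (\<forall>i j. k \<le> i \<longrightarrow> i < dim_row A \<longrightarrow> j < k \<longrightarrow> A $$ (i, j) = 0)"

definition upper_left_block :: "nat \<Rightarrow> 'a mat \<Rightarrow> 'a mat" where
  "upper_left_block k A = mat k k (\<lambda>(i, j). A $$ (i, j))"

definition lower_right_block :: "nat \<Rightarrow> 'a mat \<Rightarrow> 'a mat" where
  "lower_right_block k A = mat (dim_row A - k) (dim_row A - k) (\<lambda>(i, j). A $$ (k + i, k + j))"

lemma mat_trace_diagonal_blocks:
  assumes "A \<in> carrier_mat d d" and "k \<le> d"
  shows "mat_trace A = mat_trace (upper_left_block k A) + mat_trace (lower_right_block k A)"
proof -
  have "mat_trace A = (\<Sum>i<k + (d - k). A $$ (i, i))"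
    using assms by (simp add: mat_trace_def)
  then show ?thesis
    using assms unfolding sum_lessThan_add
    by (simp add: mat_trace_def upper_left_block_def lower_right_block_def)
qed

lemma diagonal_blocks_one_mat:
  assumes "k \<le> d"
  shows "upper_left_block k (1\<^sub>m d) = 1\<^sub>m k" and "lower_right_block k (1\<^sub>m d) = 1\<^sub>m (d - k)"
  using assms by (auto intro!: eq_matI simp: upper_left_block_def lower_right_block_def)

lemma index_mult_mat_split:
  fixes A B :: "'a::comm_ring_1 mat"
  assumes "A \<in> carrier_mat d d" and "B \<in> carrier_mat d d" and "i < d" and "j < d" and "k \<le> d"
  shows "(A * B) $$ (i, j)
    = (\<Sum>l<k. A $$ (i, l) * B $$ (l, j)) + (\<Sum>l<d - k. A $$ (i, k + l) * B $$ (k + l, j))"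
proof -
  have "(A * B) $$ (i, j) = (\<Sum>l<k + (d - k). A $$ (i, l) * B $$ (l, j))"
    using assms by (simp add: scalar_prod_def lessThan_atLeast0)
  then show ?thesis by (simp only: sum_lessThan_add)
qed

lemma block_upper_triangular_mult:
  fixes A B :: "'a::comm_ring_1 mat"
  assumes A: "A \<in> carrier_mat d d" and B: "B \<in> carrier_mat d d" and "k \<le> d"
    and tA: "block_upper_triangular k A" and tB: "block_upper_triangular k B"
  shows "block_upper_triangular k (A * B)"
    and "upper_left_block k (A * B) = upper_left_block k A * upper_left_block k B"
    and "lower_right_block k (A * B) = lower_right_block k A * lower_right_block k B"
proof -
  note split = index_mult_mat_split[OF A B _ _ \<open>k \<le> d\<close>]
  show "block_upper_triangular k (A * B)"
    unfolding block_upper_triangular_def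
    using A B tA tB split by (simp add: block_upper_triangular_def)
  show "upper_left_block k (A * B) = upper_left_block k A * upper_left_block k B"
  proof (rule eq_matI)
    fix i j assume "i < dim_row (upper_left_block k A * upper_left_block k B)"
      and "j < dim_col (upper_left_block k A * upper_left_block k B)"
    then have "i < k" "j < k" by (auto simp: upper_left_block_def)
    then show "upper_left_block k (A * B) $$ (i, j) = (upper_left_block k A * upper_left_block k B) $$ (i, j)"
      using split[of i j] tB B \<open>k \<le> d\<close>
      by (simp add: upper_left_block_def block_upper_triangular_def scalar_prod_def lessThan_atLeast0)
  qed (auto simp: upper_left_block_def)
  show "lower_right_block k (A * B) = lower_right_block k A * lower_right_block k B"
  proof (rule eq_matI)
    fix i j assume "i < dim_row (lower_right_block k A * lower_right_block k B)"
      and "j < dim_col (lower_right_block k A * lower_right_block k B)"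
    then have "i < d - k" "j < d - k" using A B by (auto simp: lower_right_block_def)
    then show "lower_right_block k (A * B) $$ (i, j) = (lower_right_block k A * lower_right_block k B) $$ (i, j)"
      using split[of "k + i" "k + j"] tA A B
      by (simp add: lower_right_block_def block_upper_triangular_def scalar_prod_def lessThan_atLeast0)
  qed (use A B in \<open>auto simp: lower_right_block_def\<close>)
qed

lemma block_upper_triangular_adapted:
  assumes A: "A \<in> carrier_mat d d" and P: "P \<in> carrier_mat d d" and Q: "Q \<in> carrier_mat d d"
    and W: "W \<subseteq> carrier_vec d" and inv: "\<And>v. v \<in> W \<Longrightarrow> A *\<^sub>v v \<in> W"
    and colW: "\<And>j. j < k \<Longrightarrow> col P j \<in> W"
    and coord: "\<And>w i. w \<in> W \<Longrightarrow> k \<le> i \<Longrightarrow> i < d \<Longrightarrow> (Q *\<^sub>v w) $ i = 0"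
  shows "block_upper_triangular k (Q * A * P)"
  unfolding block_upper_triangular_def
proof (intro allI impI)
  fix i j assume i: "k \<le> i" "i < dim_row (Q * A * P)" and j: "j < k"
  have "j < d" using i j Q by simp
  have "col P j \<in> carrier_vec d" using colW[OF j] W by auto
  then have "(Q * A * P) $$ (i, j) = (Q *\<^sub>v (A *\<^sub>v col P j)) $ i"
    using i \<open>j < d\<close> A P Q by simp
  then show "(Q * A * P) $$ (i, j) = 0"
    using coord[OF inv[OF colW[OF j]]] i Q by simp
qed

lemma mat_of_cols_append_mult_vec:
  assumes "set bs \<subseteq> carrier_vec n"
  shows "mat_of_cols n (bs @ cs) *\<^sub>v vec (length (bs @ cs)) (\<lambda>l. if l < length bs then c l else 0)
    = mat_of_cols n bs *\<^sub>v vec (length bs) c"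
proof (rule eq_vecI)
  fix r assume "r < dim_vec (mat_of_cols n bs *\<^sub>v vec (length bs) c)"
  then have r: "r < n" by simp
  have "(mat_of_cols n (bs @ cs) *\<^sub>v vec (length (bs @ cs)) (\<lambda>l. if l < length bs then c l else 0)) $ r
      = (\<Sum>l<length bs + length cs. (bs @ cs) ! l $ r * (if l < length bs then c l else 0))"
    using r by (simp add: mat_of_cols_def scalar_prod_def lessThan_atLeast0)
  also have "\<dots> = (\<Sum>l<length bs. bs ! l $ r * c l)"
    unfolding sum_lessThan_add by (simp add: nth_append)
  also have "\<dots> = (mat_of_cols n bs *\<^sub>v vec (length bs) c) $ r"
    using r by (simp add: mat_of_cols_def scalar_prod_def lessThan_atLeast0)
  finally show "(mat_of_cols n (bs @ cs) *\<^sub>v vec (length (bs @ cs)) (\<lambda>l. if l < length bs then c l else 0)) $ r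
      = (mat_of_cols n bs *\<^sub>v vec (length bs) c) $ r" .
qed simp

context vec_space
begin

lemma exists_spanning_li_extension:
  assumes W: "submodule class_ring W V" and A: "A \<subseteq> W" "lin_indpt A"
  obtains B where "finite B" "A \<subseteq> B" "B \<subseteq> W" "lin_indpt B" "span B = W"
proof -
  have Wc: "W \<subseteq> carrier_vec n" using W by (simp add: submodule_def)
  have bound: "finite S \<and> card S \<le> n" if "A \<subseteq> S \<and> S \<subseteq> W \<and> lin_indpt S" for S
  proof -
    have "S \<subseteq> carrier_vec n" using that Wc by blast
    then show ?thesis using li_le_dim[OF fin_dim] that dim_is_n by simp
  qed
  obtain B where "finite B" and maxB: "maximal B (\<lambda>S. A \<subseteq> S \<and> S \<subseteq> W \<and> lin_indpt S)"
    using maximal_exists[of "\<lambda>S. A \<subseteq> S \<and> S \<subseteq> W \<and> lin_indpt S" n A] bound A by blast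
  then have AB: "A \<subseteq> B" and BW: "B \<subseteq> W" and liB: "lin_indpt B" by (auto simp: maximal_def)
  have "span B = W"
  proof
    show "span B \<subseteq> W" using span_is_subset[OF BW W] .
    show "W \<subseteq> span B"
    proof
      fix w assume w: "w \<in> W"
      show "w \<in> span B"
      proof (rule ccontr)
        assume nw: "w \<notin> span B"
        have Bc: "B \<subseteq> carrier_vec n" using BW Wc by auto
        then have wB: "w \<notin> B" using nw in_own_span[of B] by auto
        have "lin_indpt (B \<union> {w})"
          using lin_dep_iff_in_span[of B w] Bc liB w Wc wB nw by auto
        then have "A \<subseteq> B \<union> {w} \<and> B \<union> {w} \<subseteq> W \<and> lin_indpt (B \<union> {w})"
          using AB BW w by auto
        then have "B \<union> {w} = B" using maxB unfolding maximal_def by blast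
        then show False using wB by auto
      qed
    qed
  qed
  then show thesis using that \<open>finite B\<close> AB BW liB by blast
qed

lemma exists_basis_extending_subspace_basis:
  assumes W: "submodule class_ring W V"
  obtains bs cs where "set bs \<subseteq> W" "span (set bs) = W" "distinct (bs @ cs)"
    "set (bs @ cs) \<subseteq> carrier_vec n" "span (set (bs @ cs)) = carrier_vec n" "length (bs @ cs) = n"
proof -
  have li_empty: "lin_indpt {}" unfolding lin_dep_def by auto
  obtain B where "finite B" and "{} \<subseteq> B" and BW: "B \<subseteq> W" and "lin_indpt B"
    and spanB: "span B = W"
    by (rule exists_spanning_li_extension[OF W empty_subsetI li_empty])
  have Bc: "B \<subseteq> carrier_vec n" using W BW by (auto simp: submodule_def)
  have "submodule class_ring (carrier_vec n) V" by unfold_locales auto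
  then obtain C where "finite C" "B \<subseteq> C" and Cc: "C \<subseteq> carrier_vec n" and "lin_indpt C"
    and spanC: "span C = carrier_vec n"
    by (rule exists_spanning_li_extension[OF _ Bc \<open>lin_indpt B\<close>])
  then have "basis C" by (simp add: basis_def)
  then have "card C = n" using dim_basis[OF \<open>finite C\<close>] dim_is_n by simp
  obtain bs where bs: "set bs = B" "distinct bs"
    using finite_distinct_list[OF \<open>finite B\<close>] by blast
  obtain cs where cs: "set cs = C - B" "distinct cs"
    using finite_distinct_list[of "C - B"] \<open>finite C\<close> by blast
  have set: "set (bs @ cs) = C" using bs cs \<open>B \<subseteq> C\<close> by auto
  have dist: "distinct (bs @ cs)" using bs cs by auto
  show thesis
  proof (rule that)
    show "length (bs @ cs) = n" using set dist distinct_card \<open>card C = n\<close> by metis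
  qed (use bs set dist BW spanB Cc spanC in simp_all)
qed

lemma mat_of_cols_spanning_invertible:
  assumes ws: "set ws \<subseteq> carrier_vec n" and len: "length ws = n"
    and span: "span (set ws) = carrier_vec n"
  obtains Q where "Q \<in> carrier_mat n n" "mat_of_cols n ws * Q = 1\<^sub>m n" "Q * mat_of_cols n ws = 1\<^sub>m n"
proof -
  let ?P = "mat_of_cols n ws"
  have "\<exists>c. unit_vec n i = lincomb_list c ws" if "i < n" for i
  proof -
    have "unit_vec n i \<in> span_list ws" using span span_list_as_span[OF ws] that by simp
    then show ?thesis by (elim in_span_listE) auto
  qed
  then obtain cf where cf: "\<And>i. i < n \<Longrightarrow> unit_vec n i = lincomb_list (cf i) ws" by metis
  define Q where "Q = mat n n (\<lambda>(l, i). cf i l)"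
  have P: "?P \<in> carrier_mat n n" and Q: "Q \<in> carrier_mat n n"
    using len by (auto simp: Q_def)
  have PQ: "?P * Q = 1\<^sub>m n"
  proof (rule eq_matI)
    fix r i assume ri: "r < dim_row (1\<^sub>m n)" "i < dim_col (1\<^sub>m n)"
    have "col Q i = vec n (cf i)" unfolding Q_def using ri by (auto simp: col_def)
    then have "(?P * Q) $$ (r, i) = (?P *\<^sub>v vec n (cf i)) $ r" using ri P Q by simp
    also have "?P *\<^sub>v vec n (cf i) = lincomb_list (cf i) ws"
      using lincomb_list_as_mat_mult[of ws "cf i"] ws len by (simp add: subset_code(1))
    also have "\<dots> = unit_vec n i" using cf ri by simp
    finally show "(?P * Q) $$ (r, i) = 1\<^sub>m n $$ (r, i)" using ri by simp
  qed (use P Q in auto)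
  then show thesis using that Q mat_mult_left_right_inverse[OF P Q PQ] by blast
qed

lemma mat_of_cols_inverse_span_prefix:
  assumes bs: "set bs \<subseteq> carrier_vec n" and len: "length (bs @ cs) = n"
    and Q: "Q \<in> carrier_mat n n" and QP: "Q * mat_of_cols n (bs @ cs) = 1\<^sub>m n"
    and w: "w \<in> span (set bs)" and i: "length bs \<le> i" "i < n"
  shows "(Q *\<^sub>v w) $ i = 0"
proof -
  have P: "mat_of_cols n (bs @ cs) \<in> carrier_mat n n"
    using len mat_of_cols_carrier(1)[of n "bs @ cs"] by simp
  obtain c where "w = lincomb_list c bs"
    using w span_list_as_span[OF bs] by (metis in_span_listE)
  define c' where "c' = vec (length (bs @ cs)) (\<lambda>l. if l < length bs then c l else 0)"
  have "w = mat_of_cols n (bs @ cs) *\<^sub>v c'"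
    using \<open>w = lincomb_list c bs\<close> lincomb_list_as_mat_mult[of bs c] bs
      mat_of_cols_append_mult_vec[OF bs, of cs c]
    by (simp add: c'_def subset_code(1))
  then have "Q *\<^sub>v w = c'"
    using P Q QP len by (simp add: c'_def assoc_mult_mat_vec[symmetric, of Q n n _ n])
  then show ?thesis using i len by (simp add: c'_def)
qed

text \<open>The columns of P are a basis of the whole space extending a basis of W, and Q = P\<inverse>
  takes coordinates with respect to it.\<close>
lemma subspace_adapted_basis:
  assumes W: "submodule class_ring W V" and "W \<noteq> {0\<^sub>v n}" and "W \<noteq> carrier_vec n"
  obtains P Q k where "P \<in> carrier_mat n n" "Q \<in> carrier_mat n n" "P * Q = 1\<^sub>m n" "Q * P = 1\<^sub>m n"
    "0 < k" "k < n" "\<And>j. j < k \<Longrightarrow> col P j \<in> W"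
    "\<And>w i. w \<in> W \<Longrightarrow> k \<le> i \<Longrightarrow> i < n \<Longrightarrow> (Q *\<^sub>v w) $ i = 0"
proof -
  obtain bs cs where bsW: "set bs \<subseteq> W" and spanW: "span (set bs) = W"
    and dist: "distinct (bs @ cs)" and ws: "set (bs @ cs) \<subseteq> carrier_vec n"
    and span: "span (set (bs @ cs)) = carrier_vec n" and len: "length (bs @ cs) = n"
    using exists_basis_extending_subspace_basis[OF W] by blast
  define P where "P = mat_of_cols n (bs @ cs)"
  define k where "k = length bs"
  obtain Q where Q: "Q \<in> carrier_mat n n" and PQ: "P * Q = 1\<^sub>m n" and QP: "Q * P = 1\<^sub>m n"
    using mat_of_cols_spanning_invertible[OF ws len span] unfolding P_def by blast
  have P: "P \<in> carrier_mat n n" using len mat_of_cols_carrier(1)[of n "bs @ cs"] by (simp add: P_def)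
  have bs: "set bs \<subseteq> carrier_vec n" using ws by simp
  have "bs \<noteq> []"
  proof
    assume "bs = []"
    then have "W = {0\<^sub>v n}" using spanW span_empty by simp
    then show False using \<open>W \<noteq> {0\<^sub>v n}\<close> by contradiction
  qed
  then have "0 < k" by (simp add: k_def)
  moreover have "cs \<noteq> []"
  proof
    assume "cs = []"
    then have "W = carrier_vec n" using spanW span by simp
    then show False using \<open>W \<noteq> carrier_vec n\<close> by contradiction
  qed
  then have "k < n" using len by (simp add: k_def flip: length_greater_0_conv)
  moreover have "col P j \<in> W" if "j < k" for j
  proof -
    have j: "j < length (bs @ cs)" using that \<open>k < n\<close> len by simp
    then have "col P j = (bs @ cs) ! j"
      unfolding P_def using ws nth_mem[OF j] by (intro col_mat_of_cols) auto
    moreover have "(bs @ cs) ! j = bs ! j" and "bs ! j \<in> set bs"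
      using that by (simp_all add: k_def nth_append)
    ultimately show ?thesis using bsW by auto
  qed
  moreover have "(Q *\<^sub>v w) $ i = 0" if "w \<in> W" "k \<le> i" "i < n" for w i
    using mat_of_cols_inverse_span_prefix[OF bs len Q QP[unfolded P_def]] spanW that
    by (simp add: k_def)
  ultimately show thesis using that P Q PQ QP by blast
qed

end

section \<open>Representations and characters\<close>

lemma is_rep_carrier: "is_rep G n \<rho> \<Longrightarrow> g \<in> carrier G \<Longrightarrow> \<rho> g \<in> carrier_mat n n"
  unfolding is_rep_def by auto

lemma is_rep_mult:
  "is_rep G n \<rho> \<Longrightarrow> x \<in> carrier G \<Longrightarrow> y \<in> carrier G \<Longrightarrow> \<rho> (x \<otimes>\<^bsub>G\<^esub> y) = \<rho> x * \<rho> y"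
  unfolding is_rep_def by auto

lemma is_rep_one: "is_rep G n \<rho> \<Longrightarrow> \<rho> \<one>\<^bsub>G\<^esub> = 1\<^sub>m n"
  unfolding is_rep_def by auto

lemma is_rep_pow:
  assumes "group G" and "is_rep G n \<rho>" and "g \<in> carrier G"
  shows "\<rho> (g [^]\<^bsub>G\<^esub> (k::nat)) = \<rho> g ^\<^sub>m k"
proof (induct k)
  case 0
  then show ?case using is_rep_one[OF assms(2)] is_rep_carrier[OF assms(2,3)] by simp
next
  case (Suc k)
  interpret group G by fact
  have "\<rho> (g [^]\<^bsub>G\<^esub> Suc k) = \<rho> (g [^]\<^bsub>G\<^esub> k) * \<rho> g"
    using is_rep_mult[OF assms(2)] assms(3) by simp
  then show ?case using Suc by simp
qed

lemma is_rep_pow_ord: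
  assumes "group G" and "finite (carrier G)" and "is_rep G n \<rho>" and "g \<in> carrier G"
  shows "\<rho> g ^\<^sub>m group.ord G g = 1\<^sub>m n"
proof -
  have "\<rho> g ^\<^sub>m group.ord G g = \<rho> (g [^]\<^bsub>G\<^esub> group.ord G g)"
    using is_rep_pow[OF assms(1,3,4)] by simp
  then show ?thesis
    using group.pow_ord_eq_1[OF assms(1,4)] is_rep_one[OF assms(3)] by simp
qed

lemma rep_char_eq_mat_trace:
  "is_rep G n \<rho> \<Longrightarrow> g \<in> carrier G \<Longrightarrow> rep_char G n \<rho> g = mat_trace (\<rho> g)"
  unfolding rep_char_def mat_trace_def using is_rep_carrier by fastforce

lemma rep_char_one: "group G \<Longrightarrow> is_rep G n \<rho> \<Longrightarrow> rep_char G n \<rho> \<one>\<^bsub>G\<^esub> = of_nat n"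
  unfolding rep_char_def using is_rep_one[of G n \<rho>] by (simp add: group.is_monoid monoid.one_closed)

lemma char_ker_rep_char:
  assumes "group G" and "finite (carrier G)" and \<rho>: "is_rep G n \<rho>"
  shows "char_ker G (rep_char G n \<rho>) = {g \<in> carrier G. \<rho> g = 1\<^sub>m n}"
proof -
  have "mat_trace (\<rho> g) = of_nat n \<longleftrightarrow> \<rho> g = 1\<^sub>m n" if g: "g \<in> carrier G" for g
  proof
    assume "mat_trace (\<rho> g) = of_nat n"
    moreover have "0 < group.ord G g" using group.ord_ge_1[OF assms(1,2) g] by simp
    ultimately show "\<rho> g = 1\<^sub>m n"
      using finite_order_mat_trace_eq_dim_imp_one is_rep_carrier[OF \<rho> g]
        is_rep_pow_ord[OF assms g] by blast
  qed (simp add: mat_trace_def)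
  then show ?thesis
    using rep_char_eq_mat_trace[OF \<rho>] rep_char_one[OF assms(1) \<rho>]
    by (auto simp: char_ker_def)
qed

lemma rep_kernel_normal:
  fixes G (structure)
  assumes "group G" and \<rho>: "is_rep G n \<rho>"
  shows "{g \<in> carrier G. \<rho> g = 1\<^sub>m n} \<lhd> G"
proof -
  interpret group G by fact
  let ?N = "{g \<in> carrier G. \<rho> g = 1\<^sub>m n}"
  have conj: "\<rho> (x \<otimes> h \<otimes> inv x) = \<rho> x * \<rho> h * \<rho> (inv x)" if "x \<in> carrier G" "h \<in> carrier G" for x h
    using is_rep_mult[OF \<rho>] that by simp
  have inv: "\<rho> x * \<rho> (inv x) = 1\<^sub>m n" if "x \<in> carrier G" for x
    using is_rep_mult[OF \<rho>, of x "inv x"] is_rep_one[OF \<rho>] that by simp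
  have "\<rho> (inv x) = 1\<^sub>m n" if "x \<in> ?N" for x
    using inv[of x] that is_rep_carrier[OF \<rho>, of "inv x"] by simp
  then have "subgroup ?N G"
    using is_rep_mult[OF \<rho>] is_rep_one[OF \<rho>] by (intro subgroupI) auto
  moreover have "x \<otimes> h \<otimes> inv x \<in> ?N" if "x \<in> carrier G" "h \<in> ?N" for x h
    using conj[of x h] inv[of x] that is_rep_carrier[OF \<rho>, of x] by simp
  ultimately show ?thesis by (simp add: normal_inv_iff)
qed

lemma Irr_char_ker_normal:
  assumes "group G" and "finite (carrier G)" and "\<chi> \<in> Irr G"
  shows "char_ker G \<chi> \<lhd> G"
proof -
  obtain n \<rho> where "\<chi> = rep_char G n \<rho>" and "is_rep G n \<rho>"
    using assms(3) by (auto simp: Irr_def irr_rep_def)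
  then show ?thesis
    using char_ker_rep_char[OF assms(1,2)] rep_kernel_normal[OF assms(1)] by simp
qed

lemma is_rep_conjugate:
  assumes \<rho>: "is_rep G d \<rho>" and P: "P \<in> carrier_mat d d" and Q: "Q \<in> carrier_mat d d"
    and PQ: "P * Q = 1\<^sub>m d" and QP: "Q * P = 1\<^sub>m d"
  shows "is_rep G d (\<lambda>x. Q * \<rho> x * P)"
  unfolding is_rep_def
proof (intro conjI ballI)
  fix x y assume x: "x \<in> carrier G" and y: "y \<in> carrier G"
  note [simp] = assoc_mult_mat[of _ d d _ d _ d]
  have "Q * \<rho> x * P * (Q * \<rho> y * P) = Q * \<rho> x * (P * Q) * \<rho> y * P"
    using P Q is_rep_carrier[OF \<rho> x] is_rep_carrier[OF \<rho> y] by simp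
  then show "Q * \<rho> (x \<otimes>\<^bsub>G\<^esub> y) * P = Q * \<rho> x * P * (Q * \<rho> y * P)"
    using PQ P Q is_rep_carrier[OF \<rho> x] is_rep_carrier[OF \<rho> y] is_rep_mult[OF \<rho> x y] by simp
qed (use P Q QP is_rep_carrier[OF \<rho>] is_rep_one[OF \<rho>] in auto)

lemma is_rep_diagonal_blocks:
  assumes \<rho>: "is_rep G d \<rho>" and "k \<le> d"
    and tri: "\<And>x. x \<in> carrier G \<Longrightarrow> block_upper_triangular k (\<rho> x)"
  shows "is_rep G k (\<lambda>x. upper_left_block k (\<rho> x))"
    and "is_rep G (d - k) (\<lambda>x. lower_right_block k (\<rho> x))"
proof -
  note mult = block_upper_triangular_mult[OF is_rep_carrier[OF \<rho>] is_rep_carrier[OF \<rho>] \<open>k \<le> d\<close> tri tri]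
  show "is_rep G k (\<lambda>x. upper_left_block k (\<rho> x))"
    unfolding is_rep_def
    using mult(2) is_rep_mult[OF \<rho>] is_rep_one[OF \<rho>] diagonal_blocks_one_mat[OF \<open>k \<le> d\<close>]
    by (simp add: upper_left_block_def)
  show "is_rep G (d - k) (\<lambda>x. lower_right_block k (\<rho> x))"
    unfolding is_rep_def
  proof (intro conjI ballI)
    fix x assume "x \<in> carrier G"
    then have "dim_row (\<rho> x) = d" using is_rep_carrier[OF \<rho>] by blast
    then show "lower_right_block k (\<rho> x) \<in> carrier_mat (d - k) (d - k)"
      by (simp add: lower_right_block_def)
  next
    show "lower_right_block k (\<rho> \<one>\<^bsub>G\<^esub>) = 1\<^sub>m (d - k)"
      using is_rep_one[OF \<rho>] diagonal_blocks_one_mat[OF \<open>k \<le> d\<close>] by simp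
  next
    fix x y assume "x \<in> carrier G" "y \<in> carrier G"
    then show "lower_right_block k (\<rho> (x \<otimes>\<^bsub>G\<^esub> y)) = lower_right_block k (\<rho> x) * lower_right_block k (\<rho> y)"
      using mult(3) is_rep_mult[OF \<rho>] by simp
  qed
qed

text \<open>In a basis adapted to W the representation is block upper triangular; \<rho>1 and \<rho>2 are its
  diagonal blocks.\<close>
lemma reducible_rep_split:
  assumes \<rho>: "is_rep G d \<rho>" and W: "invariant_subspace G d \<rho> W"
    and "W \<noteq> {0\<^sub>v d}" and "W \<noteq> carrier_vec d"
  obtains k \<rho>1 \<rho>2 where "0 < k" "k < d" "is_rep G k \<rho>1" "is_rep G (d - k) \<rho>2"
    "\<And>x. x \<in> carrier G \<Longrightarrow> mat_trace (\<rho> x) = mat_trace (\<rho>1 x) + mat_trace (\<rho>2 x)"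
    "\<And>x. x \<in> carrier G \<Longrightarrow> \<rho> x = 1\<^sub>m d \<Longrightarrow> \<rho>1 x = 1\<^sub>m k \<and> \<rho>2 x = 1\<^sub>m (d - k)"
proof -
  interpret V: vec_space "TYPE(complex)" d .
  have Wc: "W \<subseteq> carrier_vec d" and Winv: "\<And>g v. g \<in> carrier G \<Longrightarrow> v \<in> W \<Longrightarrow> \<rho> g *\<^sub>v v \<in> W"
    using W by (auto simp: invariant_subspace_def)
  have sub: "submodule class_ring W V.V"
    using W by unfold_locales (auto simp: invariant_subspace_def)
  obtain P Q k where P: "P \<in> carrier_mat d d" and Q: "Q \<in> carrier_mat d d"
    and PQ: "P * Q = 1\<^sub>m d" and QP: "Q * P = 1\<^sub>m d" and k: "0 < k" "k < d"
    and colW: "\<And>j. j < k \<Longrightarrow> col P j \<in> W"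
    and coord: "\<And>w i. w \<in> W \<Longrightarrow> k \<le> i \<Longrightarrow> i < d \<Longrightarrow> (Q *\<^sub>v w) $ i = 0"
    using V.subspace_adapted_basis[OF sub \<open>W \<noteq> {0\<^sub>v d}\<close> \<open>W \<noteq> carrier_vec d\<close>] by blast
  define M where "M x = Q * \<rho> x * P" for x
  have M: "is_rep G d M" unfolding M_def by (rule is_rep_conjugate[OF \<rho> P Q PQ QP])
  have tri: "block_upper_triangular k (M x)" if x: "x \<in> carrier G" for x
    unfolding M_def using is_rep_carrier[OF \<rho> x] P Q Wc Winv[OF x] colW coord
    by (rule block_upper_triangular_adapted)
  have sim: "similar_mat_wit (\<rho> x) (M x) P Q" if "x \<in> carrier G" for x
    unfolding M_def using is_rep_carrier[OF \<rho> that] P Q PQ QP by (rule similar_mat_wit_conj)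
  show thesis
  proof (rule that[OF k is_rep_diagonal_blocks[OF M _ tri]])
    fix x assume x: "x \<in> carrier G"
    show "mat_trace (\<rho> x) = mat_trace (upper_left_block k (M x)) + mat_trace (lower_right_block k (M x))"
      using similar_mat_wit_mat_trace[OF sim[OF x]]
        mat_trace_diagonal_blocks[OF is_rep_carrier[OF M x] less_imp_le[OF k(2)]]
      by simp
    assume "\<rho> x = 1\<^sub>m d"
    then have "M x = 1\<^sub>m d" using similar_mat_wit_one[OF similar_mat_wit_sym[OF sim[OF x]]] by blast
    then show "upper_left_block k (M x) = 1\<^sub>m k \<and> lower_right_block k (M x) = 1\<^sub>m (d - k)"
      using diagonal_blocks_one_mat[OF less_imp_le[OF k(2)]] by simp
  qed (use k in simp_all)
qed

text \<open>Induction on the degree: splitting along an invariant subspace, the trace is additive, so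
  one of the two pieces still has trace different from its degree at h.\<close>
lemma exists_irr_rep_trivial_on_detecting:
  assumes "is_rep G d \<rho>" and "\<forall>n \<in> N. \<rho> n = 1\<^sub>m d" and "mat_trace (\<rho> h) \<noteq> of_nat d"
    and N: "N \<subseteq> carrier G" and h: "h \<in> carrier G"
  obtains d' \<rho>' where "irr_rep G d' \<rho>'" "\<forall>n \<in> N. \<rho>' n = 1\<^sub>m d'" "mat_trace (\<rho>' h) \<noteq> of_nat d'"
proof -
  have "\<exists>d' \<rho>'. irr_rep G d' \<rho>' \<and> (\<forall>n \<in> N. \<rho>' n = 1\<^sub>m d') \<and> mat_trace (\<rho>' h) \<noteq> of_nat d'"
    using assms(1-3)
  proof (induct d arbitrary: \<rho> rule: less_induct)
    case (less d \<rho>)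
    note \<rho> = less.prems(1) and triv = less.prems(2) and tr_h = less.prems(3)
    show ?case
    proof (cases "irr_rep G d \<rho>")
      case True
      then show ?thesis using triv tr_h by blast
    next
      case False
      have "0 < d" using tr_h is_rep_carrier[OF \<rho> h] by (cases d) (auto simp: mat_trace_def)
      with False obtain W where W: "invariant_subspace G d \<rho> W" "W \<noteq> {0\<^sub>v d}" "W \<noteq> carrier_vec d"
        using \<rho> by (auto simp: irr_rep_def)
      obtain k \<rho>1 \<rho>2 where k: "0 < k" "k < d" and \<rho>1: "is_rep G k \<rho>1"
        and \<rho>2: "is_rep G (d - k) \<rho>2"
        and tr: "\<And>x. x \<in> carrier G \<Longrightarrow> mat_trace (\<rho> x) = mat_trace (\<rho>1 x) + mat_trace (\<rho>2 x)"
        and one: "\<And>x. x \<in> carrier G \<Longrightarrow> \<rho> x = 1\<^sub>m d \<Longrightarrow> \<rho>1 x = 1\<^sub>m k \<and> \<rho>2 x = 1\<^sub>m (d - k)"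
        using reducible_rep_split[OF \<rho> W] by blast
      have triv1: "\<forall>n \<in> N. \<rho>1 n = 1\<^sub>m k" and triv2: "\<forall>n \<in> N. \<rho>2 n = 1\<^sub>m (d - k)"
        using one triv N by auto
      have "mat_trace (\<rho>1 h) \<noteq> of_nat k \<or> mat_trace (\<rho>2 h) \<noteq> of_nat (d - k)"
      proof (rule ccontr)
        assume "\<not> ?thesis"
        then have "mat_trace (\<rho> h) = of_nat k + of_nat (d - k)" using tr[OF h] by simp
        also have "\<dots> = of_nat d" using k by (simp flip: of_nat_add)
        finally show False using tr_h by contradiction
      qed
      moreover have "d - k < d" using k by simp
      ultimately show ?thesis
        using less.hyps[OF \<open>k < d\<close> \<rho>1 triv1] less.hyps[OF \<open>d - k < d\<close> \<rho>2 triv2] by blast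
    qed
  qed
  then show thesis using that by blast
qed

definition perm_mat :: "'c list \<Rightarrow> ('c \<Rightarrow> 'c) \<Rightarrow> 'a::{zero, one} mat" where
  "perm_mat xs f = mat (length xs) (length xs) (\<lambda>(i, j). if f (xs ! i) = xs ! j then 1 else 0)"

lemma perm_mat_id:
  assumes "distinct xs"
  shows "perm_mat xs id = 1\<^sub>m (length xs)"
  using assms by (auto intro!: eq_matI simp: perm_mat_def nth_eq_iff_index_eq)

lemma perm_mat_comp:
  assumes "distinct xs" and "\<And>x. x \<in> set xs \<Longrightarrow> f x \<in> set xs"
  shows "perm_mat xs (g \<circ> f) = (perm_mat xs f * perm_mat xs g :: 'a::semiring_1 mat)"
proof (rule eq_matI)
  fix i j assume "i < dim_row (perm_mat xs f * perm_mat xs g :: 'a mat)"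
    and "j < dim_col (perm_mat xs f * perm_mat xs g :: 'a mat)"
  then have i: "i < length xs" and j: "j < length xs" by (auto simp: perm_mat_def)
  obtain l0 where l0: "l0 < length xs" "xs ! l0 = f (xs ! i)"
    using assms(2)[OF nth_mem[OF i]] by (metis in_set_conv_nth)
  have "(perm_mat xs f * perm_mat xs g :: 'a mat) $$ (i, j)
      = (\<Sum>l \<in> {0..<length xs}. (if f (xs ! i) = xs ! l then 1 else 0) * (if g (xs ! l) = xs ! j then 1 else 0))"
    using i j by (simp add: perm_mat_def scalar_prod_def)
  also have "\<dots> = (\<Sum>l \<in> {0..<length xs}. if l = l0 then (if g (xs ! l0) = xs ! j then 1 else 0) else 0)"
  proof (rule sum.cong[OF refl])
    fix l assume "l \<in> {0..<length xs}"
    then have "f (xs ! i) = xs ! l \<longleftrightarrow> l = l0" using l0 assms(1) by (auto simp: nth_eq_iff_index_eq)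
    then show "(if f (xs ! i) = xs ! l then 1 else 0) * (if g (xs ! l) = xs ! j then 1 else 0)
        = (if l = l0 then (if g (xs ! l0) = xs ! j then 1 else 0) else (0::'a))" by simp
  qed
  also have "\<dots> = perm_mat xs (g \<circ> f) $$ (i, j)"
    using i j l0 by (simp add: perm_mat_def)
  finally show "perm_mat xs (g \<circ> f) $$ (i, j) = (perm_mat xs f * perm_mat xs g :: 'a mat) $$ (i, j)" ..
qed (auto simp: perm_mat_def)

lemma perm_mat_cong:
  assumes "\<And>x. x \<in> set xs \<Longrightarrow> f x = g x"
  shows "perm_mat xs f = perm_mat xs g"
  using assms by (auto intro!: eq_matI simp: perm_mat_def)

lemma mat_trace_perm_mat:
  "mat_trace (perm_mat xs f :: 'a::comm_ring_1 mat) = of_nat (card {i. i < length xs \<and> f (xs ! i) = xs ! i})"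
  by (simp add: mat_trace_def perm_mat_def sum.If_cases lessThan_def Collect_conj_eq)

lemma (in group) rcosets_r_coset_closed:
  assumes "H \<subseteq> carrier G" and "C \<in> rcosets H" and "x \<in> carrier G"
  shows "C #> x \<in> rcosets H"
proof -
  obtain a where a: "a \<in> carrier G" "C = H #> a" using assms(2) unfolding RCOSETS_def by blast
  then have "C #> x = H #> (a \<otimes> x)" using coset_mult_assoc[OF assms(1) a(1) assms(3)] by simp
  then show ?thesis using rcosetsI[OF assms(1)] a assms(3) by simp
qed

lemma (in group) rcosets_r_coset_normal:
  assumes N: "N \<lhd> G" and C: "C \<in> rcosets N" and n: "n \<in> N"
  shows "C #> n = C"
proof -
  have sub: "subgroup N G" using N normal_imp_subgroup by blast
  have Nc: "N \<subseteq> carrier G" using subgroup.subset[OF sub] .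
  obtain a where a: "a \<in> carrier G" "C = N #> a" using C unfolding RCOSETS_def by blast
  have nc: "n \<in> carrier G" using n Nc by blast
  have n': "a \<otimes> n \<otimes> inv a \<in> N" using normal.inv_op_closed2[OF N a(1) n] .
  then have n'c: "a \<otimes> n \<otimes> inv a \<in> carrier G" using Nc by blast
  have "C #> n = N #> (a \<otimes> n)" using a coset_mult_assoc[OF Nc a(1) nc] by simp
  also have "a \<otimes> n = (a \<otimes> n \<otimes> inv a) \<otimes> a" using a(1) nc by (simp add: m_assoc)
  also have "N #> ((a \<otimes> n \<otimes> inv a) \<otimes> a) = (N #> (a \<otimes> n \<otimes> inv a)) #> a"
    using coset_mult_assoc[OF Nc n'c a(1)] by simp
  also have "N #> (a \<otimes> n \<otimes> inv a) = N" using subgroup.rcos_const[OF sub is_group n'] .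
  finally show ?thesis using a by simp
qed

lemma coset_perm_is_rep:
  fixes G (structure)
  assumes "group G" and H: "subgroup H G" and cs: "set cs = rcosets H" "distinct cs"
  shows "is_rep G (length cs) (\<lambda>x. (perm_mat cs (\<lambda>C. C #> x) :: complex mat))"
proof -
  interpret group G by fact
  have Hc: "H \<subseteq> carrier G" using subgroup.subset[OF H] .
  have cosC: "C \<subseteq> carrier G" if "C \<in> set cs" for C
    using rcosets_subset_PowG[OF H] that cs(1) by blast
  show ?thesis
    unfolding is_rep_def
  proof (intro conjI ballI)
    have "perm_mat cs (\<lambda>C. C #> \<one>) = (perm_mat cs id :: complex mat)"
      using cosC by (intro perm_mat_cong) simp
    then show "perm_mat cs (\<lambda>C. C #> \<one>) = (1\<^sub>m (length cs) :: complex mat)"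
      using perm_mat_id[OF cs(2)] by simp
  next
    fix x y assume x: "x \<in> carrier G" and y: "y \<in> carrier G"
    have "C #> (x \<otimes> y) = C #> x #> y" if "C \<in> set cs" for C
      using coset_mult_assoc[OF cosC x y] that by simp
    then have "perm_mat cs (\<lambda>C. C #> (x \<otimes> y)) = perm_mat cs ((\<lambda>C. C #> y) \<circ> (\<lambda>C. C #> x))"
      by (intro perm_mat_cong) simp
    also have "\<dots> = (perm_mat cs (\<lambda>C. C #> x) * perm_mat cs (\<lambda>C. C #> y) :: complex mat)"
      by (rule perm_mat_comp[OF cs(2)]) (use rcosets_r_coset_closed[OF Hc] x cs(1) in auto)
    finally show "(perm_mat cs (\<lambda>C. C #> (x \<otimes> y)) :: complex mat)
        = perm_mat cs (\<lambda>C. C #> x) * perm_mat cs (\<lambda>C. C #> y)" .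
  qed (simp add: perm_mat_def)
qed

text \<open>The witness is the permutation representation on the cosets of N: N acts trivially, while
  h moves the coset N, so fewer than all cosets are fixed by h.\<close>
lemma coset_perm_rep:
  fixes G (structure)
  assumes "group G" and "finite (carrier G)" and N: "N \<lhd> G"
    and h: "h \<in> carrier G" and "h \<notin> N"
  obtains d \<rho> where "is_rep G d \<rho>" "\<forall>n \<in> N. \<rho> n = 1\<^sub>m d" "mat_trace (\<rho> h) \<noteq> of_nat d"
proof -
  interpret group G by fact
  have sub: "subgroup N G" using N normal_imp_subgroup by blast
  have Nc: "N \<subseteq> carrier G" using subgroup.subset[OF sub] .
  have "finite (rcosets N)"
    using rcosets_subset_PowG[OF sub] assms(2) by (meson finite_Pow_iff finite_subset)
  then obtain cs where cs: "set cs = rcosets N" "distinct cs" using finite_distinct_list by blast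
  define \<rho> where "\<rho> x = (perm_mat cs (\<lambda>C. C #> x) :: complex mat)" for x
  have "is_rep G (length cs) \<rho>"
    unfolding \<rho>_def by (rule coset_perm_is_rep[OF assms(1) sub cs])
  moreover have "\<rho> n = 1\<^sub>m (length cs)" if "n \<in> N" for n
  proof -
    have "perm_mat cs (\<lambda>C. C #> n) = (perm_mat cs id :: complex mat)"
      using rcosets_r_coset_normal[OF N _ that] cs(1) by (intro perm_mat_cong) simp
    then show ?thesis using perm_mat_id[OF cs(2)] by (simp add: \<rho>_def)
  qed
  moreover have "mat_trace (\<rho> h) \<noteq> of_nat (length cs)"
  proof -
    have "N \<in> set cs" using cs(1) rcosetsI[OF Nc one_closed] coset_mult_one[OF Nc] by simp
    then obtain i0 where i0: "i0 < length cs" "cs ! i0 = N" by (auto simp: in_set_conv_nth)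
    have "N #> h \<noteq> N" using rcos_self[OF h sub] \<open>h \<notin> N\<close> by auto
    then have "{i. i < length cs \<and> cs ! i #> h = cs ! i} \<subseteq> {..<length cs} - {i0}"
      using i0 by auto
    then have "card {i. i < length cs \<and> cs ! i #> h = cs ! i} \<le> card ({..<length cs} - {i0})"
      by (intro card_mono) auto
    also have "\<dots> < length cs" using i0 by simp
    finally show ?thesis by (simp add: \<rho>_def mat_trace_perm_mat)
  qed
  ultimately show thesis using that by blast
qed

lemma irr_rep_commuting_scalar:
  assumes irr: "irr_rep G n \<rho>" and C: "C \<in> carrier_mat n n"
    and comm: "\<And>x. x \<in> carrier G \<Longrightarrow> C * \<rho> x = \<rho> x * C"
  shows "\<exists>c. C = c \<cdot>\<^sub>m 1\<^sub>m n"
proof -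
  have \<rho>: "is_rep G n \<rho>" and "0 < n" using irr by (auto simp: irr_rep_def)
  obtain lam where "eigenvalue C lam"
    using spectrum_non_empty[OF C \<open>0 < n\<close>] unfolding spectrum_def by auto
  then obtain v where "eigenvector C v lam" unfolding eigenvalue_def by auto
  then have v: "v \<in> carrier_vec n" "v \<noteq> 0\<^sub>v n" "C *\<^sub>v v = lam \<cdot>\<^sub>v v"
    using C unfolding eigenvector_def by auto
  define W where "W = {w \<in> carrier_vec n. C *\<^sub>v w = lam \<cdot>\<^sub>v w}"
  have "invariant_subspace G n \<rho> W"
    unfolding invariant_subspace_def
  proof (intro conjI ballI allI)
    show "W \<subseteq> carrier_vec n" and "0\<^sub>v n \<in> W" using C by (auto simp: W_def)
  next
    fix a b assume "a \<in> W" "b \<in> W"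
    then show "a + b \<in> W"
      using C by (auto simp: W_def mult_add_distrib_mat_vec smult_add_distrib_vec)
  next
    fix c a assume "a \<in> W"
    then show "c \<cdot>\<^sub>v a \<in> W"
      using C by (auto simp: W_def mult_mat_vec smult_smult_assoc mult.commute)
  next
    fix g a assume g: "g \<in> carrier G" and a: "a \<in> W"
    have rg: "\<rho> g \<in> carrier_mat n n" using is_rep_carrier[OF \<rho> g] .
    have ac: "a \<in> carrier_vec n" and Ca: "C *\<^sub>v a = lam \<cdot>\<^sub>v a" using a by (auto simp: W_def)
    have "C *\<^sub>v (\<rho> g *\<^sub>v a) = (C * \<rho> g) *\<^sub>v a" using C rg ac by simp
    also have "\<dots> = (\<rho> g * C) *\<^sub>v a" using comm[OF g] by simp
    also have "\<dots> = \<rho> g *\<^sub>v (lam \<cdot>\<^sub>v a)" using C rg ac Ca by simp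
    also have "\<dots> = lam \<cdot>\<^sub>v (\<rho> g *\<^sub>v a)" using rg ac by (simp add: mult_mat_vec)
    finally show "\<rho> g *\<^sub>v a \<in> W" using rg ac by (simp add: W_def)
  qed
  moreover have "W \<noteq> {0\<^sub>v n}" using v by (auto simp: W_def)
  ultimately have W: "W = carrier_vec n" using irr by (auto simp: irr_rep_def)
  have "C = lam \<cdot>\<^sub>m 1\<^sub>m n"
  proof (rule eq_matI)
    fix i j assume ij: "i < dim_row (lam \<cdot>\<^sub>m 1\<^sub>m n)" "j < dim_col (lam \<cdot>\<^sub>m 1\<^sub>m n)"
    have "unit_vec n j \<in> W" using W ij by simp
    then have "(C *\<^sub>v unit_vec n j) $ i = (lam \<cdot>\<^sub>v unit_vec n j) $ i" unfolding W_def by simp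
    then show "C $$ (i, j) = (lam \<cdot>\<^sub>m 1\<^sub>m n) $$ (i, j)" using C ij by simp
  qed (use C in auto)
  then show ?thesis by blast
qed

lemma smult_one_mat_pow: "(c \<cdot>\<^sub>m 1\<^sub>m n) ^\<^sub>m k = (c ^ k) \<cdot>\<^sub>m (1\<^sub>m n :: 'a::comm_ring_1 mat)"
proof (induct k)
  case (Suc k)
  have "(c ^ k) \<cdot>\<^sub>m 1\<^sub>m n * (c \<cdot>\<^sub>m 1\<^sub>m n) = (c ^ Suc k) \<cdot>\<^sub>m (1\<^sub>m n :: 'a mat)"
  proof (rule eq_matI)
    fix i j assume ij: "i < dim_row ((c ^ Suc k) \<cdot>\<^sub>m (1\<^sub>m n :: 'a mat))"
      "j < dim_col ((c ^ Suc k) \<cdot>\<^sub>m (1\<^sub>m n :: 'a mat))"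
    have "((c ^ k) \<cdot>\<^sub>m 1\<^sub>m n * (c \<cdot>\<^sub>m 1\<^sub>m n)) $$ (i, j)
        = (\<Sum>l \<in> {0..<n}. c ^ k * (if l = i then 1 else 0) * (c * (if l = j then 1 else 0)))"
      using ij by (simp add: scalar_prod_def)
    also have "\<dots> = (\<Sum>l \<in> {0..<n}. if l = i then (if i = j then c ^ k * c else 0) else 0)"
      by (rule sum.cong) auto
    also have "\<dots> = (if i = j then c ^ k * c else 0)" using ij by (simp add: sum.delta)
    finally show "((c ^ k) \<cdot>\<^sub>m 1\<^sub>m n * (c \<cdot>\<^sub>m 1\<^sub>m n)) $$ (i, j) = ((c ^ Suc k) \<cdot>\<^sub>m (1\<^sub>m n :: 'a mat)) $$ (i, j)"
      using ij by (simp add: mult.commute)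
  qed auto
  then show ?case using Suc by simp
qed (intro eq_matI, auto)

text \<open>By Schur's lemma \<rho> g is a scalar matrix, and its scalar is a root of unity.\<close>
lemma irr_rep_commuting_in_char_center:
  assumes "group G" and "finite (carrier G)" and irr: "irr_rep G n \<rho>" and g: "g \<in> carrier G"
    and comm: "\<And>x. x \<in> carrier G \<Longrightarrow> \<rho> g * \<rho> x = \<rho> x * \<rho> g"
  shows "g \<in> char_center G (rep_char G n \<rho>)"
proof -
  have \<rho>: "is_rep G n \<rho>" and "0 < n" using irr by (auto simp: irr_rep_def)
  obtain c where c: "\<rho> g = c \<cdot>\<^sub>m 1\<^sub>m n"
    using irr_rep_commuting_scalar[OF irr is_rep_carrier[OF \<rho> g] comm] by blast
  have "(c ^ group.ord G g) \<cdot>\<^sub>m 1\<^sub>m n = (1\<^sub>m n :: complex mat)"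
    using is_rep_pow_ord[OF assms(1,2) \<rho> g] by (simp add: c smult_one_mat_pow)
  then have "((c ^ group.ord G g) \<cdot>\<^sub>m 1\<^sub>m n) $$ (0, 0) = (1\<^sub>m n :: complex mat) $$ (0, 0)"
    by simp
  then have "c ^ group.ord G g = 1" using \<open>0 < n\<close> by simp
  moreover have "0 < group.ord G g" using group.ord_ge_1[OF assms(1,2) g] by simp
  ultimately have "cmod c = 1" using power_eq_1_iff[of c "group.ord G g"] by auto
  then have "cmod (rep_char G n \<rho> g) = of_nat n"
    using g c by (simp add: rep_char_def norm_mult)
  then show ?thesis
    using g rep_char_one[OF assms(1) \<rho>] by (simp add: char_center_def)
qed

section \<open>Commutators and the subgroup \<open>K(G)\<close>\<close>

context group
begin

lemma mult_inv_cancel_left [simp]: "x \<in> carrier G \<Longrightarrow> y \<in> carrier G \<Longrightarrow> x \<otimes> (inv x \<otimes> y) = y"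
  by (simp flip: m_assoc)

lemma inv_mult_cancel_left [simp]: "x \<in> carrier G \<Longrightarrow> y \<in> carrier G \<Longrightarrow> inv x \<otimes> (x \<otimes> y) = y"
  by (simp flip: m_assoc)

lemma gcomm_closed [simp]: "g \<in> carrier G \<Longrightarrow> x \<in> carrier G \<Longrightarrow> gcomm G g x \<in> carrier G"
  unfolding gcomm_def by simp

lemma gcomm_eq: "g \<in> carrier G \<Longrightarrow> x \<in> carrier G \<Longrightarrow> gcomm G g x = inv (x \<otimes> g) \<otimes> (g \<otimes> x)"
  unfolding gcomm_def by (simp add: inv_mult_group m_assoc)

lemma mult_comm_gcomm: "g \<in> carrier G \<Longrightarrow> x \<in> carrier G \<Longrightarrow> g \<otimes> x = x \<otimes> g \<otimes> gcomm G g x"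
  unfolding gcomm_def by (simp add: m_assoc)

lemma gcomm_center: "z \<in> grp_center G \<Longrightarrow> x \<in> carrier G \<Longrightarrow> gcomm G z x = \<one>"
  unfolding grp_center_def by (simp add: gcomm_eq)

lemma gcomm_conj:
  assumes "g \<in> carrier G" and "x \<in> carrier G" and "y \<in> carrier G"
  shows "y \<otimes> gcomm G g x \<otimes> inv y = inv (gcomm G g (inv y)) \<otimes> gcomm G g (x \<otimes> inv y)"
  using assms unfolding gcomm_def by (simp add: inv_mult_group m_assoc)

lemma generate_normalI:
  assumes S: "S \<subseteq> carrier G"
    and conj: "\<And>s y. s \<in> S \<Longrightarrow> y \<in> carrier G \<Longrightarrow> y \<otimes> s \<otimes> inv y \<in> generate G S"
  shows "generate G S \<lhd> G"
proof (rule normal_invI[OF generate_is_subgroup[OF S]])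
  fix y h assume y: "y \<in> carrier G"
  show "h \<in> generate G S \<Longrightarrow> y \<otimes> h \<otimes> inv y \<in> generate G S"
  proof (induct h rule: generate.induct)
    case one
    show ?case using y generate.one[of G S] by simp
  next
    case (incl s)
    show ?case using conj[OF incl y] .
  next
    case (inv s)
    then have "s \<in> carrier G" using S by auto
    then have "inv (y \<otimes> s \<otimes> inv y) = y \<otimes> inv s \<otimes> inv y"
      using y by (simp add: inv_mult_group m_assoc)
    then show ?case using generate_m_inv_closed[OF S conj[OF inv y]] by simp
  next
    case (eng h1 h2)
    note in_carrier = eng(1,3)[THEN generate_in_carrier[OF S]]
    have "y \<otimes> (h1 \<otimes> h2) \<otimes> inv y = (y \<otimes> h1 \<otimes> inv y) \<otimes> (y \<otimes> h2 \<otimes> inv y)"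
      using in_carrier y by (simp add: inv_solve_left m_assoc)
    then show ?case using generate.eng[OF eng(2,4)] by simp
  qed
qed

lemma gcomm_in_elem_comm: "x \<in> carrier G \<Longrightarrow> gcomm G g x \<in> elem_comm G g"
  unfolding elem_comm_def by (rule generate.incl) blast

lemma elem_comm_normal:
  assumes g: "g \<in> carrier G"
  shows "elem_comm G g \<lhd> G"
proof -
  have S: "{gcomm G g x | x. x \<in> carrier G} \<subseteq> carrier G" using g by auto
  show ?thesis
    unfolding elem_comm_def
  proof (rule generate_normalI[OF S])
    fix s y assume "s \<in> {gcomm G g x | x. x \<in> carrier G}" and y: "y \<in> carrier G"
    then obtain x where x: "x \<in> carrier G" and s: "s = gcomm G g x" by blast
    have "gcomm G g (inv y) \<in> elem_comm G g" and "gcomm G g (x \<otimes> inv y) \<in> elem_comm G g"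
      using x y by (simp_all add: gcomm_in_elem_comm)
    then show "y \<otimes> s \<otimes> inv y \<in> generate G {gcomm G g x | x. x \<in> carrier G}"
      unfolding s gcomm_conj[OF g x y] elem_comm_def
      by (intro generate.eng[OF generate_m_inv_closed[OF S]])
  qed
qed

lemma elem_comm_subset:
  assumes "subgroup H G" and "g \<in> carrier G" and "\<And>x. x \<in> carrier G \<Longrightarrow> gcomm G g x \<in> H"
  shows "elem_comm G g \<subseteq> H"
  unfolding elem_comm_def using assms by (intro generate_subgroup_incl) auto

lemma set_comm_subset:
  assumes "subgroup H G" and "\<And>g x. g \<in> A \<Longrightarrow> x \<in> carrier G \<Longrightarrow> gcomm G g x \<in> H"
  shows "set_comm G A \<subseteq> H"
  unfolding set_comm_def using assms by (intro generate_subgroup_incl) auto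

lemma rcos_eq_iff:
  assumes "subgroup H G" and "a \<in> carrier G" and "b \<in> carrier G"
  shows "H #> a = H #> b \<longleftrightarrow> a \<otimes> inv b \<in> H"
  using assms subgroup.rcos_module[OF assms(1) is_group assms(3,2)] rcos_self[OF assms(2,1)]
    repr_independence[of a H b]
  by auto

lemma upper_Z_iff_gcomm:
  assumes N: "N \<lhd> G" and g: "g \<in> carrier G"
  shows "g \<in> upper_Z G N \<longleftrightarrow> (\<forall>x \<in> carrier G. gcomm G g x \<in> N)"
proof -
  have sub: "subgroup N G" using N normal_imp_subgroup by blast
  have Nc: "N \<subseteq> carrier G" using subgroup.subset[OF sub] .
  have "(N #> g) <#> (N #> x) = (N #> x) <#> (N #> g) \<longleftrightarrow> gcomm G g x \<in> N"
    if x: "x \<in> carrier G" for x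
  proof -
    let ?a = "g \<otimes> x" and ?b = "x \<otimes> g"
    have "(N #> g) <#> (N #> x) = (N #> x) <#> (N #> g) \<longleftrightarrow> N #> ?a = N #> ?b"
      using normal.rcos_sum[OF N g x] normal.rcos_sum[OF N x g] by simp
    also have "\<dots> \<longleftrightarrow> ?a \<otimes> inv ?b \<in> N" using rcos_eq_iff[OF sub] g x by simp
    also have "\<dots> \<longleftrightarrow> inv ?b \<otimes> ?a \<in> N"
    proof
      assume "?a \<otimes> inv ?b \<in> N"
      from normal.inv_op_closed1[OF N _ this, of ?b] show "inv ?b \<otimes> ?a \<in> N"
        using g x by (simp add: m_assoc)
    next
      assume "inv ?b \<otimes> ?a \<in> N"
      moreover have "?b \<otimes> (inv ?b \<otimes> ?a) \<otimes> inv ?b = ?a \<otimes> inv ?b"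
        using g x by (subst mult_inv_cancel_left) auto
      ultimately show "?a \<otimes> inv ?b \<in> N"
        using normal.inv_op_closed2[OF N, of ?b "inv ?b \<otimes> ?a"] g x by simp
    qed
    finally show ?thesis using g x by (simp add: gcomm_eq)
  qed
  moreover have "N #> g \<in> rcosets N" using rcosetsI[OF Nc g] .
  ultimately show ?thesis
    using g by (auto simp: upper_Z_def grp_center_def FactGroup_def RCOSETS_def)
qed

lemma center_subset_upper_Z:
  assumes "N \<lhd> G"
  shows "grp_center G \<subseteq> upper_Z G N"
proof
  fix z assume z: "z \<in> grp_center G"
  then have "z \<in> carrier G" by (simp add: grp_center_def)
  moreover have "\<one> \<in> N" using assms normal_imp_subgroup subgroup.one_closed by blast
  ultimately show "z \<in> upper_Z G N"
    using upper_Z_iff_gcomm[OF assms] gcomm_center[OF z] by simp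
qed

lemma normal_carrier_Inter:
  assumes "\<And>N. N \<in> F \<Longrightarrow> N \<lhd> G"
  shows "carrier G \<inter> \<Inter>F \<lhd> G"
proof (rule normal_invI)
  have "subgroup (\<Inter>(insert (carrier G) F)) G"
    using assms subgroup_self normal_imp_subgroup by (intro subgroups_Inter) auto
  then show "subgroup (carrier G \<inter> \<Inter>F) G" by simp
next
  fix x h assume x: "x \<in> carrier G" and h: "h \<in> carrier G \<inter> \<Inter>F"
  have "x \<otimes> h \<otimes> inv x \<in> N" if "N \<in> F" for N
    using normal.inv_op_closed2[OF assms[OF that] x] h that by blast
  then show "x \<otimes> h \<otimes> inv x \<in> carrier G \<inter> \<Inter>F" using x h by blast
qed

end

lemma K_grp_normal:
  assumes "group G" and "finite (carrier G)"
  shows "K_grp G \<lhd> G"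
proof -
  interpret group G by fact
  show ?thesis
  proof (cases "grp_center G = carrier G")
    case True
    then show ?thesis using normal_carrier_Inter[of "{}"] by (simp add: K_grp_def)
  next
    case False
    have "carrier G \<inter> \<Inter>{char_ker G \<chi> | \<chi>. \<chi> \<in> Irr G \<and> grp_center G \<subset> char_center G \<chi>} \<lhd> G"
      using Irr_char_ker_normal[OF assms] by (intro normal_carrier_Inter) blast
    then show ?thesis using False by (simp add: K_grp_def)
  qed
qed

lemma irr_rep_trivial_on_elem_comm_char_center:
  fixes G (structure)
  assumes "group G" and "finite (carrier G)" and irr: "irr_rep G d \<rho>" and g: "g \<in> carrier G"
    and triv: "\<forall>n \<in> elem_comm G g. \<rho> n = 1\<^sub>m d"
  shows "insert g (grp_center G) \<subseteq> char_center G (rep_char G d \<rho>)"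
proof -
  interpret group G by fact
  have \<rho>: "is_rep G d \<rho>" using irr by (simp add: irr_rep_def)
  have central: "x \<in> char_center G (rep_char G d \<rho>)"
    if x: "x \<in> carrier G" and comm: "\<And>y. y \<in> carrier G \<Longrightarrow> \<rho> (x \<otimes> y) = \<rho> (y \<otimes> x)" for x
    using irr_rep_commuting_in_char_center[OF assms(1,2) irr x] comm is_rep_mult[OF \<rho>] x by simp
  have "\<rho> (g \<otimes> y) = \<rho> (y \<otimes> g)" if y: "y \<in> carrier G" for y
  proof -
    have "\<rho> (g \<otimes> y) = \<rho> (y \<otimes> g) * \<rho> (gcomm G g y)"
      using mult_comm_gcomm[OF g y] is_rep_mult[OF \<rho>] g y by simp
    also have "\<dots> = \<rho> (y \<otimes> g)"
      using triv gcomm_in_elem_comm[OF y] is_rep_carrier[OF \<rho>, of "y \<otimes> g"] g y by simp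
    finally show ?thesis .
  qed
  then have "g \<in> char_center G (rep_char G d \<rho>)" using central[OF g] by blast
  moreover have "z \<in> char_center G (rep_char G d \<rho>)" if "z \<in> grp_center G" for z
    using that by (intro central) (auto simp: grp_center_def)
  ultimately show ?thesis by blast
qed

lemma K_grp_subset_elem_comm:
  fixes G (structure)
  assumes "group G" and "finite (carrier G)" and g: "g \<in> carrier G" and "g \<notin> grp_center G"
  shows "K_grp G \<subseteq> elem_comm G g"
proof
  interpret group G by fact
  fix h assume hK: "h \<in> K_grp G"
  let ?N = "elem_comm G g"
  have h: "h \<in> carrier G" using hK by (auto simp: K_grp_def split: if_splits)
  show "h \<in> ?N"
  proof (rule ccontr)
    assume "h \<notin> ?N"
    have N: "?N \<lhd> G" using elem_comm_normal[OF g] .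
    then have Nc: "?N \<subseteq> carrier G" using normal_imp_subgroup subgroup.subset by blast
    obtain d \<rho> where "is_rep G d \<rho>" "\<forall>n \<in> ?N. \<rho> n = 1\<^sub>m d" "mat_trace (\<rho> h) \<noteq> of_nat d"
      using coset_perm_rep[OF assms(1,2) N h \<open>h \<notin> ?N\<close>] by blast
    then obtain d' \<rho>' where irr: "irr_rep G d' \<rho>'" and triv: "\<forall>n \<in> ?N. \<rho>' n = 1\<^sub>m d'"
      and tr: "mat_trace (\<rho>' h) \<noteq> of_nat d'"
      using exists_irr_rep_trivial_on_detecting[OF _ _ _ Nc h] by blast
    have \<rho>': "is_rep G d' \<rho>'" using irr by (simp add: irr_rep_def)
    let ?\<chi> = "rep_char G d' \<rho>'"
    have "grp_center G \<subset> char_center G ?\<chi>"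
      using irr_rep_trivial_on_elem_comm_char_center[OF assms(1,2) irr g triv] \<open>g \<notin> grp_center G\<close>
      by blast
    moreover have "?\<chi> \<in> Irr G" using irr by (auto simp: Irr_def)
    ultimately have "h \<in> char_ker G ?\<chi>"
      using hK \<open>g \<notin> grp_center G\<close> g by (auto simp: K_grp_def split: if_splits)
    then show False
      using tr rep_char_eq_mat_trace[OF \<rho>' h] rep_char_one[OF assms(1) \<rho>'] by (simp add: char_ker_def)
  qed
qed

lemma K_grp_not_subset_one:
  assumes "group G" and "finite (carrier G)" and "K_grp G \<noteq> {\<one>\<^bsub>G\<^esub>}"
  shows "\<not> K_grp G \<subseteq> {\<one>\<^bsub>G\<^esub>}"
  using assms normal_imp_subgroup[OF K_grp_normal[OF assms(1,2)]] subgroup.one_closed by blast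

lemma elem_comm_eq_K_grp_iff:
  fixes G (structure)
  assumes "group G" and "finite (carrier G)" and K1: "K_grp G \<noteq> {\<one>}" and g: "g \<in> carrier G"
  shows "elem_comm G g = K_grp G \<longleftrightarrow> g \<in> upper_Z G (K_grp G) - grp_center G"
proof -
  interpret group G by fact
  have K: "K_grp G \<lhd> G" using K_grp_normal[OF assms(1,2)] .
  note ZK_iff = upper_Z_iff_gcomm[OF K g]
  show ?thesis
  proof
    assume eq: "elem_comm G g = K_grp G"
    then have "g \<in> upper_Z G (K_grp G)" using ZK_iff gcomm_in_elem_comm by auto
    moreover have "g \<notin> grp_center G"
    proof
      assume "g \<in> grp_center G"
      then have "elem_comm G g \<subseteq> {\<one>}"
        using elem_comm_subset[OF triv_subgroup g] gcomm_center by blast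
      then show False using eq K_grp_not_subset_one[OF assms(1-3)] by simp
    qed
    ultimately show "g \<in> upper_Z G (K_grp G) - grp_center G" by blast
  next
    assume "g \<in> upper_Z G (K_grp G) - grp_center G"
    then show "elem_comm G g = K_grp G"
      using elem_comm_subset[OF normal_imp_subgroup[OF K] g] ZK_iff
        K_grp_subset_elem_comm[OF assms(1,2) g]
      by blast
  qed
qed

lemma K_grp_eq_set_comm_iff:
  fixes G (structure)
  assumes "group G" and "finite (carrier G)" and K1: "K_grp G \<noteq> {\<one>}"
  shows "K_grp G = set_comm G (upper_Z G (K_grp G)) \<longleftrightarrow> \<not> upper_Z G (K_grp G) \<subseteq> grp_center G"
proof -
  interpret group G by fact
  let ?ZK = "upper_Z G (K_grp G)"
  have K: "K_grp G \<lhd> G" using K_grp_normal[OF assms(1,2)] .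
  have ZKc: "?ZK \<subseteq> carrier G" by (auto simp: upper_Z_def)
  show ?thesis
  proof
    assume eq: "K_grp G = set_comm G ?ZK"
    show "\<not> ?ZK \<subseteq> grp_center G"
    proof
      assume "?ZK \<subseteq> grp_center G"
      then have "set_comm G ?ZK \<subseteq> {\<one>}"
        using set_comm_subset[OF triv_subgroup] gcomm_center by blast
      then show False using eq K_grp_not_subset_one[OF assms] by simp
    qed
  next
    assume "\<not> ?ZK \<subseteq> grp_center G"
    then obtain g where g: "g \<in> ?ZK - grp_center G" by blast
    then have "K_grp G = elem_comm G g"
      using elem_comm_eq_K_grp_iff[OF assms] ZKc by blast
    also have "\<dots> \<subseteq> set_comm G ?ZK"
      unfolding elem_comm_def set_comm_def using g by (intro mono_generate) blast
    finally show "K_grp G = set_comm G ?ZK"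
      using set_comm_subset[OF normal_imp_subgroup[OF K]] upper_Z_iff_gcomm[OF K] ZKc by blast
  qed
qed

theorem lemma3p6:
  fixes G :: "('g, 'b) monoid_scheme"
  assumes "group G" and "finite (carrier G)"
    and "K_grp G \<noteq> {\<one>\<^bsub>G\<^esub>}"
    and "grp_center G \<subset> upper_Z G (grp_center G)"
  shows "(grp_center G \<subset> upper_Z G (K_grp G) \<longleftrightarrow> (\<exists>g \<in> carrier G. elem_comm G g = K_grp G))
       \<and> (grp_center G \<subset> upper_Z G (K_grp G) \<longleftrightarrow> K_grp G = set_comm G (upper_Z G (K_grp G)))"
proof -
  have "grp_center G \<subseteq> upper_Z G (K_grp G)"
    using group.center_subset_upper_Z[OF assms(1) K_grp_normal[OF assms(1,2)]] .
  moreover have "upper_Z G (K_grp G) \<subseteq> carrier G" by (auto simp: upper_Z_def)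
  ultimately show ?thesis
    using elem_comm_eq_K_grp_iff[OF assms(1-3)] K_grp_eq_set_comm_iff[OF assms(1-3)] by blast
qed

end
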